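(* If a link $L\subset\mathbb{R}^3$ has thickness $\tau>0$, then its secant map $S$ has Lipschitz constant $1/(2\tau)$ on $(L\times L)\setminus\Delta$. Consequently $L$ is $C^{1,1}$.
   Context: A link is a disjoint union of finitely many simple closed curves in $\mathbb{R}^3$. For distinct $x,y,z\in\mathbb{R}^3$, $r(x,y,z)$ is the radius of the circle through them ($\infty$ if collinear); the thickness is $\tau(L)=\inf r(x,y,z)$ over pairwise distinct $x,y,z\in L$. The secant map is $S(x,y)=\pm\frac{x-y}{|x-y|}\in\mathbb{R}P^2$ for $x\neq y\in L$; $\Delta$ is the diagonal of $L\times L$. Metrics: on $L\times L$, the sum of the (shorter) arclength distances in the two factors; on $\mathbb{R}P^2$, the distance between two points is $\sin\theta$, where $\theta$ is the angle between lifts of the points to $S^2$. $C^{1,1}$ is with respect to the constant-speed parametrization. *)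

theory Defs
  imports "HOL-Analysis.Analysis"
begin

type_synonym R3 = "real^3"

definition simple_closed_curve :: "R3 set \<Rightarrow> bool" where
  "simple_closed_curve C \<longleftrightarrow>
     (\<exists>g. simple_path g \<and> pathfinish g = pathstart g \<and> path_image g = C)"

definition is_link :: "R3 set \<Rightarrow> bool" where
  "is_link L \<longleftrightarrow> (\<exists>F. finite F \<and> (\<forall>C\<in>F. simple_closed_curve C) \<and>
       pairwise disjnt F \<and> L = \<Union>F)"

definition circ_radius :: "R3 \<Rightarrow> R3 \<Rightarrow> R3 \<Rightarrow> ereal" where
  "circ_radius x y z =
     (if collinear {x, y, z} then \<infinity>
      else ereal (THE \<rho>. \<exists>c. c \<in> affine hull {x, y, z} \<and>
                        dist c x = \<rho> \<and> dist c y = \<rho> \<and> dist c z = \<rho>))"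

definition thickness :: "R3 set \<Rightarrow> ereal" where
  "thickness L = Inf {circ_radius x y z | x y z.
       x \<in> L \<and> y \<in> L \<and> z \<in> L \<and> x \<noteq> y \<and> y \<noteq> z \<and> x \<noteq> z}"

text \<open>Secant map: the unit vector (x-y)/|x-y|, a lift to S^2 of the point of RP^2.\<close>
definition secant :: "R3 \<Rightarrow> R3 \<Rightarrow> R3" where
  "secant x y = (x - y) /\<^sub>R norm (x - y)"

text \<open>Distance on RP^2 between the points represented by nonzero vectors u, v:
  sin of the angle between lifts (independent of the choice of lifts).\<close>
definition rp2_dist :: "R3 \<Rightarrow> R3 \<Rightarrow> real" where
  "rp2_dist u v = sin (arccos ((u \<bullet> v) / (norm u * norm v)))"

definition path_length :: "(real \<Rightarrow> R3) \<Rightarrow> ereal" where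
  "path_length g = Sup {ereal (\<Sum>i<n. norm (g (t (Suc i)) - g (t i))) | n t.
       t 0 = 0 \<and> t n = 1 \<and> (\<forall>i<n. t i \<le> t (Suc i))}"

text \<open>Arclength (intrinsic) distance in L: infimum of lengths of paths in L joining
  x and y (infinite for points on different components).  On a simple closed curve
  this is the length of the shorter of the two arcs between x and y.\<close>
definition arc_dist :: "R3 set \<Rightarrow> R3 \<Rightarrow> R3 \<Rightarrow> ereal" where
  "arc_dist L x y = Inf {path_length g | g. path g \<and> path_image g \<subseteq> L \<and>
       pathstart g = x \<and> pathfinish g = y}"

definition C11_link :: "R3 set \<Rightarrow> bool" where
  "C11_link L \<longleftrightarrow> (\<forall>x\<in>L. \<exists>\<gamma> \<gamma>' lam K.
       (\<forall>t. \<gamma> (t + 1) = \<gamma> t) \<and> inj_on \<gamma> {0..<1} \<and>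
       \<gamma> ` {0..1} = connected_component_set L x \<and>
       (\<forall>t. (\<gamma> has_vector_derivative \<gamma>' t) (at t)) \<and>
       lam > 0 \<and> (\<forall>t. norm (\<gamma>' t) = lam) \<and>
       (\<forall>s t. norm (\<gamma>' s - \<gamma>' t) \<le> K * \<bar>s - t\<bar>))"

end

theory Submission
  imports Defs
begin

(* Thickness tau means that every circle through three points of L has radius at least tau.
   By the circumradius formula 2 rho sin(angle xyz) = |x - z|, the secants from y to x and
   from y to z then make an angle whose sine is at most |x - z| / (2 tau); two such steps and the
   triangle inequality for the sine distance on RP^2 give the Lipschitz bound for the secant map,
   first for chordal distances and hence for arclength distances.

   For the regularity, the secant bound forces an arc that stays within rho <= tau/3 of its
   starting point to make angles at most kappa = 3 rho / (2 tau) with its end-to-end chord, so the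
   arc is rectifiable with length at most |chord| / (1 - kappa^2). For the constant-speed
   parametrization of a component, of speed Lambda, every difference quotient over a window of
   length h is then within O(h) of Lambda times the secant of the window. Hence the difference
   quotients converge, the derivative has norm Lambda, and comparing two overlapping windows shows
   that the derivative is Lipschitz. *)

section \<open>Thickness bounds the angles between secants\<close>

definition gram_det :: "'a::real_inner \<Rightarrow> 'a \<Rightarrow> real" where
  "gram_det a b = (a \<bullet> a) * (b \<bullet> b) - (a \<bullet> b)^2"

lemma gram_det_nonneg: "0 \<le> gram_det a b"
proof -
  have "(a \<bullet> b)^2 \<le> (norm a * norm b)^2"
    using Cauchy_Schwarz_ineq2[of a b] by (metis abs_ge_zero power2_abs power_mono)
  then show ?thesis by (simp add: gram_det_def power_mult_distrib power2_norm_eq_inner)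
qed

lemma gram_det_collinear:
  fixes x y z :: "'a::real_inner"
  assumes "collinear {x, y, z}"
  shows "gram_det (x - y) (z - y) = 0"
proof -
  have "collinear {0, x - y, z - y}" using assms collinear_3[of x y z] by simp
  then have "\<bar>(x - y) \<bullet> (z - y)\<bar> = norm (x - y) * norm (z - y)"
    using norm_cauchy_schwarz_equal by blast
  then show ?thesis
    by (simp add: gram_det_def power2_norm_eq_inner[symmetric] power_mult_distrib[symmetric])
      (metis power2_abs)
qed

lemma circumcentre_gram_identity:
  fixes a b q :: "'a::real_inner"
  assumes q: "q = u *\<^sub>R a + w *\<^sub>R b"
    and r: "q \<bullet> q = r^2" "(q - a) \<bullet> (q - a) = r^2" "(q - b) \<bullet> (q - b) = r^2"
  shows "4 * r^2 * gram_det a b = (a \<bullet> a) * (b \<bullet> b) * ((a - b) \<bullet> (a - b))"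
proof -
  have qa: "2 * (u * (a \<bullet> a) + w * (a \<bullet> b)) = a \<bullet> a"
    using r(1,2) by (simp add: q inner_commute algebra_simps)
  have qb: "2 * (u * (a \<bullet> b) + w * (b \<bullet> b)) = b \<bullet> b"
    using r(1,3) by (simp add: q inner_commute algebra_simps)
  have rr: "r^2 = u * (u * (a \<bullet> a) + w * (a \<bullet> b)) + w * (u * (a \<bullet> b) + w * (b \<bullet> b))"
    using r(1) by (simp add: q inner_commute algebra_simps)
  have "(a - b) \<bullet> (a - b) = a \<bullet> a + b \<bullet> b - 2 * (a \<bullet> b)"
    by (simp add: inner_diff_left inner_diff_right inner_commute)
  then show ?thesis unfolding rr gram_det_def using qa qb by algebra
qed

lemma circumcentre_exists:
  fixes a b :: "'a::real_inner"
  assumes "gram_det a b \<noteq> 0"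
  obtains u w where "norm (u *\<^sub>R a + w *\<^sub>R b - a) = norm (u *\<^sub>R a + w *\<^sub>R b)"
    and "norm (u *\<^sub>R a + w *\<^sub>R b - b) = norm (u *\<^sub>R a + w *\<^sub>R b)"
proof -
  define A B D where "A = a \<bullet> a" and "B = b \<bullet> b" and "D = a \<bullet> b"
  define u where "u = B * (A - D) / (2 * gram_det a b)"
  define w where "w = A * (B - D) / (2 * gram_det a b)"
  define q where "q = u *\<^sub>R a + w *\<^sub>R b"
  have "B * (A - D) * A + A * (B - D) * D = A * gram_det a b"
    "B * (A - D) * D + A * (B - D) * B = B * gram_det a b"
    by (simp_all add: A_def B_def D_def gram_det_def algebra_simps power2_eq_square)
  moreover have "q \<bullet> a = u * A + w * D" "q \<bullet> b = u * D + w * B"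
    by (simp_all add: q_def A_def B_def D_def inner_add_left inner_commute[of b a])
  ultimately have "2 * (q \<bullet> a) = A" "2 * (q \<bullet> b) = B"
    using assms by (simp_all add: u_def w_def add_divide_distrib[symmetric])
  then have "(norm (q - a))^2 = (norm q)^2" "(norm (q - b))^2 = (norm q)^2"
    by (simp_all add: A_def B_def D_def power2_norm_eq_inner inner_diff_left inner_diff_right inner_commute)
  then show ?thesis using that[of u w] by (simp add: q_def)
qed

lemma equidistant_affine_hull_gram:
  fixes x y z c :: "'a::real_inner"
  assumes "c \<in> affine hull {x, y, z}" "dist c x = \<rho>" "dist c y = \<rho>" "dist c z = \<rho>"
  shows "4 * \<rho>^2 * gram_det (x - y) (z - y)
           = ((x - y) \<bullet> (x - y)) * ((z - y) \<bullet> (z - y)) * ((x - z) \<bullet> (x - z))"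
proof -
  obtain u v w where c: "c = u *\<^sub>R x + v *\<^sub>R y + w *\<^sub>R z" "u + v + w = 1"
    using assms(1) by (auto simp: affine_hull_3)
  have "c - y = u *\<^sub>R (x - y) + w *\<^sub>R (z - y)"
    using c by (simp add: algebra_simps flip: scaleR_add_left)
  moreover have "(c - y) \<bullet> (c - y) = \<rho>^2" "(c - y - (x - y)) \<bullet> (c - y - (x - y)) = \<rho>^2"
    "(c - y - (z - y)) \<bullet> (c - y - (z - y)) = \<rho>^2"
    using assms(2-4) by (simp_all add: dist_norm power2_norm_eq_inner[symmetric] norm_minus_commute)
  ultimately show ?thesis using circumcentre_gram_identity by fastforce
qed

lemma circ_radius_gram:
  fixes x y z :: "real^3"
  assumes "gram_det (x - y) (z - y) \<noteq> 0"
  obtains \<rho> where "circ_radius x y z = ereal \<rho>"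
    and "4 * \<rho>^2 * gram_det (x - y) (z - y)
           = ((x - y) \<bullet> (x - y)) * ((z - y) \<bullet> (z - y)) * ((x - z) \<bullet> (x - z))"
proof -
  let ?equi = "\<lambda>\<rho>. \<exists>c. c \<in> affine hull {x, y, z} \<and> dist c x = \<rho> \<and> dist c y = \<rho> \<and> dist c z = \<rho>"
  obtain u w where uw: "norm (u *\<^sub>R (x - y) + w *\<^sub>R (z - y) - (x - y)) = norm (u *\<^sub>R (x - y) + w *\<^sub>R (z - y))"
    "norm (u *\<^sub>R (x - y) + w *\<^sub>R (z - y) - (z - y)) = norm (u *\<^sub>R (x - y) + w *\<^sub>R (z - y))"
    using circumcentre_exists assms by metis
  define c where "c = y + u *\<^sub>R (x - y) + w *\<^sub>R (z - y)"
  have "c \<in> affine hull {x, y, z}"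
    unfolding affine_hull_3 by (intro CollectI exI[of _ u] exI[of _ "1 - u - w"] exI[of _ w]) (simp add: c_def algebra_simps)
  moreover have "dist c x = dist c y" "dist c z = dist c y"
    using uw by (simp_all add: c_def dist_norm algebra_simps norm_minus_commute)
  ultimately have c: "c \<in> affine hull {x, y, z}" "dist c x = dist c y" "dist c y = dist c y" "dist c z = dist c y"
    by simp_all
  note radius = equidistant_affine_hull_gram[OF c]
  have "(THE \<rho>. ?equi \<rho>) = dist c y"
  proof (rule the_equality)
    show "?equi (dist c y)" using c by blast
    fix \<rho> assume "?equi \<rho>"
    then obtain c' where c': "c' \<in> affine hull {x, y, z}" "dist c' x = \<rho>" "dist c' y = \<rho>" "dist c' z = \<rho>"
      by blast
    then have "4 * \<rho>^2 * gram_det (x - y) (z - y) = 4 * (dist c y)^2 * gram_det (x - y) (z - y)"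
      using equidistant_affine_hull_gram[OF c'] radius by simp
    then have "\<rho>^2 = (dist c y)^2" using assms by simp
    moreover have "0 \<le> \<rho>" using c'(2) by auto
    ultimately show "\<rho> = dist c y" by simp
  qed
  moreover have "\<not> collinear {x, y, z}" using assms gram_det_collinear by blast
  ultimately have "circ_radius x y z = ereal (dist c y)" by (simp add: circ_radius_def)
  then show ?thesis using that radius by blast
qed

definition sin_angle :: "'a::real_inner \<Rightarrow> 'a \<Rightarrow> real" where
  "sin_angle u v = sqrt (1 - (u \<bullet> v)^2)"

lemma sin_angle_minus [simp]: "sin_angle (- u) v = sin_angle u v" "sin_angle u (- v) = sin_angle u v"
  by (simp_all add: sin_angle_def)

lemma sin_angle_self: "norm u = 1 \<Longrightarrow> sin_angle u u = 0"
  by (simp add: sin_angle_def norm_eq_1)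

lemma inner_unit_sq_le_1:
  fixes u v :: "'a::real_inner"
  shows "norm u = 1 \<Longrightarrow> norm v = 1 \<Longrightarrow> (u \<bullet> v)^2 \<le> 1"
  using Cauchy_Schwarz_ineq2[of u v] by (simp add: abs_square_le_1)

lemma rp2_dist_eq_sin_angle: "norm u = 1 \<Longrightarrow> norm v = 1 \<Longrightarrow> rp2_dist u v = sin_angle u v"
  using Cauchy_Schwarz_ineq2[of u v] by (simp add: rp2_dist_def sin_angle_def sin_arccos)

lemma norm_reject_eq_sin_angle:
  fixes u v :: "'a::real_inner"
  assumes "norm u = 1" "norm v = 1"
  shows "norm (v - (v \<bullet> u) *\<^sub>R u) = sin_angle u v"
proof -
  have "(v - (v \<bullet> u) *\<^sub>R u) \<bullet> (v - (v \<bullet> u) *\<^sub>R u) = 1 - (u \<bullet> v)^2"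
    using assms by (simp add: inner_diff_left inner_diff_right norm_eq_1 inner_commute power2_eq_square)
  then have "(norm (v - (v \<bullet> u) *\<^sub>R u))^2 = 1 - (u \<bullet> v)^2"
    by (simp add: power2_norm_eq_inner)
  then show ?thesis unfolding sin_angle_def by (metis norm_ge_zero real_sqrt_unique)
qed

lemma sin_angle_le_norm_reject:
  fixes u v :: "'a::real_inner"
  assumes "norm u = 1" "norm v = 1"
  shows "sin_angle u v \<le> norm (v - t *\<^sub>R u)"
proof -
  have "(v - t *\<^sub>R u) \<bullet> (v - t *\<^sub>R u) = 1 - 2 * t * (u \<bullet> v) + t^2"
    using assms by (simp add: inner_diff_left inner_diff_right norm_eq_1 inner_commute power2_eq_square)
  then have "(norm (v - t *\<^sub>R u))^2 = 1 - 2 * t * (u \<bullet> v) + t^2"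
    by (simp add: power2_norm_eq_inner)
  also have "\<dots> \<ge> 1 - (u \<bullet> v)^2" by (smt (verit) sum_power2_ge_zero power2_diff)
  finally show ?thesis unfolding sin_angle_def by (simp add: real_le_lsqrt)
qed

lemma sin_angle_nonneg: "norm u = 1 \<Longrightarrow> norm v = 1 \<Longrightarrow> 0 \<le> sin_angle u v"
  using norm_reject_eq_sin_angle[of u v] by (metis norm_ge_zero)

lemma sin_angle_triangle:
  fixes p q r :: "'a::real_inner"
  assumes p: "norm p = 1" and q: "norm q = 1" and r: "norm r = 1"
  shows "sin_angle p r \<le> sin_angle p q + sin_angle q r"
proof -
  define l where "l = r \<bullet> q"
  define m where "m = q \<bullet> p"
  have "\<bar>l\<bar> \<le> 1" using Cauchy_Schwarz_ineq2[of r q] q r by (simp add: l_def m_def)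
  have "sin_angle p r \<le> norm (r - (l * m) *\<^sub>R p)" by (rule sin_angle_le_norm_reject[OF p r])
  also have "r - (l * m) *\<^sub>R p = (r - l *\<^sub>R q) + l *\<^sub>R (q - m *\<^sub>R p)"
    by (simp add: algebra_simps)
  also have "norm \<dots> \<le> norm (r - l *\<^sub>R q) + \<bar>l\<bar> * norm (q - m *\<^sub>R p)"
    using norm_triangle_ineq[of "r - l *\<^sub>R q" "l *\<^sub>R (q - m *\<^sub>R p)"] by simp
  also have "\<dots> = sin_angle q r + \<bar>l\<bar> * sin_angle p q"
    using norm_reject_eq_sin_angle[OF q r] norm_reject_eq_sin_angle[OF p q] by (simp add: l_def m_def)
  also have "\<bar>l\<bar> * sin_angle p q \<le> sin_angle p q"
    using \<open>\<bar>l\<bar> \<le> 1\<close> sin_angle_nonneg[OF p q] by (simp add: mult_left_le_one_le)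
  finally show ?thesis by simp
qed

lemma sin_angle_sgn:
  fixes a b :: "'a::real_inner"
  assumes "a \<noteq> 0" "b \<noteq> 0"
  shows "sin_angle (sgn a) (sgn b) = sqrt (gram_det a b) / (norm a * norm b)"
proof -
  have "1 - (sgn a \<bullet> sgn b)^2 = gram_det a b / (norm a * norm b)^2"
    using assms by (simp add: sgn_div_norm gram_det_def power2_norm_eq_inner[symmetric] field_simps)
  then show ?thesis by (simp add: sin_angle_def real_sqrt_divide)
qed

lemma secant_eq_sgn: "secant x y = sgn (x - y)"
  by (simp add: secant_def sgn_div_norm)

lemma norm_secant: "x \<noteq> y \<Longrightarrow> norm (secant x y) = 1"
  by (simp add: secant_def)

lemma secant_commute: "secant y x = - secant x y"
  by (simp add: secant_eq_sgn flip: sgn_minus)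

lemma inner_secant: "(x - y) \<bullet> secant x y = norm (x - y)"
  by (cases "x = y") (simp_all add: secant_def power2_norm_eq_inner[symmetric] power2_eq_square divide_inverse)

lemma thickness_le_circ_radius:
  "\<lbrakk>x \<in> L; y \<in> L; z \<in> L; x \<noteq> y; y \<noteq> z; x \<noteq> z\<rbrakk> \<Longrightarrow> thickness L \<le> circ_radius x y z"
  unfolding thickness_def by (rule Inf_lower) blast

text \<open>The circumradius \<open>\<rho>\<close> satisfies \<open>2 \<rho> sin \<angle>xyz = |x - z|\<close>, so thickness bounds the angle at \<open>y\<close>.\<close>

lemma sin_angle_secants_le:
  assumes thick: "ereal \<tau> \<le> thickness L" and "\<tau> > 0"
    and L: "x \<in> L" "y \<in> L" "z \<in> L" and "x \<noteq> y" "z \<noteq> y"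
  shows "sin_angle (secant x y) (secant z y) \<le> dist x z / (2 * \<tau>)"
proof -
  define a where "a = x - y"
  define b where "b = z - y"
  have ab: "a \<noteq> 0" "b \<noteq> 0" using \<open>x \<noteq> y\<close> \<open>z \<noteq> y\<close> by (auto simp: a_def b_def)
  have "4 * \<tau>^2 * gram_det a b \<le> (a \<bullet> a) * (b \<bullet> b) * (dist x z)^2"
  proof (cases "gram_det a b = 0")
    case False
    then obtain \<rho> where \<rho>: "circ_radius x y z = ereal \<rho>"
      "4 * \<rho>^2 * gram_det a b = (a \<bullet> a) * (b \<bullet> b) * (dist x z)^2"
      using circ_radius_gram[of x y z] by (auto simp: a_def b_def dist_norm power2_norm_eq_inner)
    have "x \<noteq> z" using False by (auto simp: a_def b_def gram_det_def power2_eq_square)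
    then have "\<tau> \<le> \<rho>"
      using thick thickness_le_circ_radius[OF L] \<rho>(1) assms(6,7) by (metis ereal_less_eq(3) order_trans)
    then have "4 * \<tau>^2 * gram_det a b \<le> 4 * \<rho>^2 * gram_det a b"
      using \<open>\<tau> > 0\<close> gram_det_nonneg[of a b] by (intro mult_right_mono) (auto intro: power_mono)
    then show ?thesis using \<rho>(2) by simp
  qed simp
  then have "gram_det a b \<le> (norm a * norm b * dist x z / (2 * \<tau>))^2"
    using \<open>\<tau> > 0\<close> by (simp add: power2_norm_eq_inner[symmetric] field_simps)
  then have "sqrt (gram_det a b) \<le> norm a * norm b * dist x z / (2 * \<tau>)"
    using \<open>\<tau> > 0\<close> by (intro real_le_lsqrt) auto
  then show ?thesis
    using ab by (simp add: secant_eq_sgn a_def[symmetric] b_def[symmetric] sin_angle_sgn field_simps)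
qed

lemma sin_angle_secants_le_dist:
  assumes thick: "ereal \<tau> \<le> thickness L" and "\<tau> > 0"
    and L: "x \<in> L" "y \<in> L" "x' \<in> L" "y' \<in> L" and "x \<noteq> y" "x' \<noteq> y'"
  shows "sin_angle (secant x y) (secant x' y') \<le> (dist x x' + dist y y') / (2 * \<tau>)"
proof -
  note at_y = sin_angle_secants_le[OF thick \<open>\<tau> > 0\<close>]
  have unit: "norm (secant p q) = 1" if "p \<noteq> q" for p q using that by (rule norm_secant)
  consider "x' \<noteq> y" | "x' = y" "x = y'" | "x' = y" "x \<noteq> y'" by blast
  then show ?thesis
  proof cases
    case 1
    have "sin_angle (secant x y) (secant x' y')
          \<le> sin_angle (secant x y) (secant x' y) + sin_angle (secant y x') (secant y' x')"
      using sin_angle_triangle[of "secant x y" "secant x' y" "secant x' y'"] 1 assms(7,8)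
      by (simp add: unit secant_commute[of x'])
    also have "\<dots> \<le> dist x x' / (2 * \<tau>) + dist y y' / (2 * \<tau>)"
      using at_y[of x y x'] at_y[of y x' y'] L 1 assms(7,8) by (intro add_mono) auto
    finally show ?thesis by (simp add: add_divide_distrib)
  next
    case 2
    then show ?thesis
      using \<open>\<tau> > 0\<close> sin_angle_self[OF unit[OF \<open>x \<noteq> y\<close>]] by (simp add: secant_commute[of y])
  next
    case 3
    have "sin_angle (secant x y) (secant x' y')
          \<le> sin_angle (secant y x) (secant y' x) + sin_angle (secant x y') (secant x' y')"
      using sin_angle_triangle[of "secant x y" "secant x y'" "secant x' y'"] 3 assms(7,8)
      by (simp add: unit secant_commute[of _ x])
    also have "\<dots> \<le> dist y y' / (2 * \<tau>) + dist x x' / (2 * \<tau>)"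
      using at_y[of y x y'] at_y[of x y' x'] L 3 assms(7,8) by (intro add_mono) (auto simp: dist_commute)
    finally show ?thesis by (simp add: add_divide_distrib)
  qed
qed

lemma path_length_ge_dist: "ereal (dist (pathstart g) (pathfinish g)) \<le> path_length g"
proof -
  define t :: "nat \<Rightarrow> real" where "t i = (if i = 0 then 0 else 1)" for i
  have "ereal (\<Sum>i<1. norm (g (t (Suc i)) - g (t i))) \<le> path_length g"
    unfolding path_length_def by (rule Sup_upper) (auto simp: t_def intro!: exI[of _ 1] exI[of _ t])
  then show ?thesis by (simp add: t_def pathstart_def pathfinish_def dist_norm norm_minus_commute)
qed

lemma arc_dist_ge_dist: "ereal (dist x y) \<le> arc_dist L x y"
  unfolding arc_dist_def by (rule Inf_greatest) (auto intro: order.trans[OF _ path_length_ge_dist])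

lemma secant_lipschitz_arc_dist:
  assumes "ereal \<tau> \<le> thickness L" and "\<tau> > 0"
    and L: "x \<in> L" "y \<in> L" "x' \<in> L" "y' \<in> L" and "x \<noteq> y" "x' \<noteq> y'"
  shows "ereal (rp2_dist (secant x y) (secant x' y'))
           \<le> ereal (1 / (2 * \<tau>)) * (arc_dist L x x' + arc_dist L y y')"
proof -
  have "rp2_dist (secant x y) (secant x' y') \<le> 1 / (2 * \<tau>) * (dist x x' + dist y y')"
    using sin_angle_secants_le_dist[OF assms] assms(7,8) by (simp add: rp2_dist_eq_sin_angle norm_secant)
  also have "ereal \<dots> \<le> ereal (1 / (2 * \<tau>)) * (arc_dist L x x' + arc_dist L y y')"
    using \<open>\<tau> > 0\<close> by (simp only: times_ereal.simps(1)[symmetric] plus_ereal.simps(1)[symmetric])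
      (intro ereal_mult_left_mono add_mono arc_dist_ge_dist, simp_all)
  finally show ?thesis by simp
qed

section \<open>Arc length along a thick loop\<close>

lemma sorted_le_last: "sorted xs \<Longrightarrow> x \<in> set xs \<Longrightarrow> x \<le> last xs"
  by (induction xs) (auto simp: last_in_set)

lemma sorted_hd_le: "sorted xs \<Longrightarrow> x \<in> set xs \<Longrightarrow> hd xs \<le> x"
  by (cases xs) auto

lemma periodic_shift_int:
  fixes f :: "real \<Rightarrow> 'a"
  assumes "\<And>t. f (t + 1) = f t"
  shows "f (t + of_int n) = f t"
proof -
  have "f (t + real m) = f t" for t m
    by (induction m arbitrary: t) (simp_all add: assms flip: add.assoc)
  from this[of "t + of_int n" "nat (- n)"] this[of t "nat n"] show ?thesis
    by (cases "n \<ge> 0") simp_all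
qed

lemma periodic_uniformly_continuous:
  fixes f :: "real \<Rightarrow> 'a::metric_space"
  assumes cont: "continuous_on UNIV f" and per: "\<And>t. f (t + 1) = f t"
  shows "uniformly_continuous_on UNIV f"
  unfolding uniformly_continuous_on_def
proof (intro allI impI)
  fix e :: real assume "e > 0"
  have "uniformly_continuous_on {-1..2} f"
    by (rule compact_uniformly_continuous) (auto intro: continuous_on_subset[OF cont])
  then obtain d where d: "d > 0"
    "\<And>x x'. x \<in> {-1..2} \<Longrightarrow> x' \<in> {-1..2} \<Longrightarrow> dist x' x < d \<Longrightarrow> dist (f x') (f x) < e"
    using \<open>e > 0\<close> by (rule uniformly_continuous_onE) (rule that)
  have "dist (f t) (f s) < e" if "dist t s < min d 1" for s t
  proof -
    define n where "n = \<lfloor>s\<rfloor>"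
    have "n \<le> s" "s < n + 1" unfolding n_def by linarith+
    then have "s - n \<in> {-1..2}" "t - n \<in> {-1..2}" "dist (t - n) (s - n) < d"
      using that by (auto simp: dist_real_def abs_less_iff)
    then show ?thesis
      using d(2) periodic_shift_int[of f, OF per, of "s - n" n] periodic_shift_int[of f, OF per, of "t - n" n]
      by simp
  qed
  then show "\<exists>d>0. \<forall>s\<in>UNIV. \<forall>t\<in>UNIV. dist t s < d \<longrightarrow> dist (f t) (f s) < e"
    using d(1) by (intro exI[of _ "min d 1"]) auto
qed

text \<open>\<open>G\<close> parametrizes one component of a thick link with period 1; the thickness enters only
  through the secant estimate.\<close>

locale thick_loop =
  fixes G :: "real \<Rightarrow> real^3" and \<tau> :: real
  assumes tau_pos: "\<tau> > 0"
    and continuous_G: "continuous_on UNIV G"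
    and G_periodic: "\<And>t. G (t + 1) = G t"
    and G_inj: "\<And>s t. \<bar>s - t\<bar> < 1 \<Longrightarrow> G s = G t \<Longrightarrow> s = t"
    and sin_angle_secants: "\<And>x y x' y'. \<lbrakk>x \<in> range G; y \<in> range G; x' \<in> range G; y' \<in> range G;
        x \<noteq> y; x' \<noteq> y'\<rbrakk> \<Longrightarrow> sin_angle (secant x y) (secant x' y') \<le> (dist x x' + dist y y') / (2 * \<tau>)"
begin

lemma G_periodic_int: "G (t + of_int n) = G t"
  using G_periodic by (rule periodic_shift_int)

fun polygon_length :: "real list \<Rightarrow> real" where
  "polygon_length (a # b # xs) = dist (G a) (G b) + polygon_length (b # xs)"
| "polygon_length _ = 0"

definition subdiv :: "real \<Rightarrow> real \<Rightarrow> real list \<Rightarrow> bool" where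
  "subdiv a b xs \<longleftrightarrow> xs \<noteq> [] \<and> hd xs = a \<and> last xs = b \<and> sorted xs"

lemma subdiv_two: "a \<le> b \<Longrightarrow> subdiv a b [a, b]"
  by (simp add: subdiv_def)

lemma subdiv_Cons: "subdiv a c (x # y # xs) \<longleftrightarrow> x = a \<and> a \<le> y \<and> subdiv y c (y # xs)"
  by (auto simp: subdiv_def)

lemma subdiv_atLeastAtMost: "subdiv a b xs \<Longrightarrow> t \<in> set xs \<Longrightarrow> t \<in> {a..b}"
  unfolding subdiv_def using sorted_hd_le sorted_le_last by auto

lemma polygon_length_nonneg: "polygon_length xs \<ge> 0"
  by (induction xs rule: polygon_length.induct) auto

lemma polygon_length_append:
  "ys \<noteq> [] \<Longrightarrow> polygon_length (xs @ ys) = polygon_length (xs @ [hd ys]) + polygon_length ys"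
  by (induction xs rule: polygon_length.induct) (auto simp: neq_Nil_conv)

lemma subdiv_append:
  assumes "subdiv a b xs" "subdiv b c ys"
  shows "subdiv a c (xs @ tl ys)" "polygon_length (xs @ tl ys) = polygon_length xs + polygon_length ys"
proof -
  obtain ys' where ys: "ys = b # ys'" using assms(2) by (cases ys) (auto simp: subdiv_def)
  obtain xs' where xs: "xs = xs' @ [b]"
    using assms(1) by (metis append_butlast_last_id subdiv_def)
  have "x \<le> z" if "x \<in> set xs" "z \<in> set ys'" for x z
    using subdiv_atLeastAtMost[OF assms(1) that(1)] subdiv_atLeastAtMost[OF assms(2), of z] that(2) ys
    by auto
  with assms show "subdiv a c (xs @ tl ys)"
    by (auto simp: subdiv_def sorted_append ys xs hd_append)
  show "polygon_length (xs @ tl ys) = polygon_length xs + polygon_length ys"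
    using polygon_length_append[of "b # ys'" xs'] by (simp add: xs ys)
qed

lemma polygon_length_degenerate: "subdiv a a xs \<Longrightarrow> polygon_length xs = 0"
proof (induction xs rule: polygon_length.induct)
  case (1 x y xs)
  then have "x = y" "subdiv a a (y # xs)"
    using subdiv_atLeastAtMost[OF "1.prems", of y] by (auto simp: subdiv_def)
  with 1 show ?case by simp
qed simp_all

lemma subdiv_split:
  assumes "subdiv a c xs" "a \<le> b" "b \<le> c"
  obtains ys zs where "subdiv a b ys" "subdiv b c zs" "polygon_length xs \<le> polygon_length ys + polygon_length zs"
  using assms
proof (induction xs arbitrary: a thesis rule: polygon_length.induct)
  case (1 x y xs)
  then have x: "x = a" "a \<le> y" and y: "subdiv y c (y # xs)" by (auto simp: subdiv_Cons)
  show ?case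
  proof (cases "b \<le> y")
    case True
    have "polygon_length (x # y # xs) \<le> polygon_length [a, b] + polygon_length (b # y # xs)"
      using x dist_triangle[of "G a" "G y" "G b"] by simp
    then show ?thesis
      using "1.prems" True y by (intro "1.prems"(1)[of "[a, b]" "b # y # xs"]) (auto simp: subdiv_Cons subdiv_def x)
  next
    case False
    then have "y \<le> b" by simp
    then obtain ys zs where "subdiv y b ys" "subdiv b c zs"
      "polygon_length (y # xs) \<le> polygon_length ys + polygon_length zs"
      using "1.IH"[OF _ y _ "1.prems"(4)] by blast
    moreover obtain ys' where "ys = y # ys'" using \<open>subdiv y b ys\<close> by (cases ys) (auto simp: subdiv_def)
    ultimately show ?thesis using "1.prems"(1)[of "a # ys"] x by (auto simp: subdiv_Cons)
  qed
next
  case ("2_2" x)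
  then show ?case by (intro "2_2.prems"(1)[of "[x]" "[x]"]) (auto simp: subdiv_def)
qed (simp add: subdiv_def)

lemma subdiv_shift: "subdiv a b xs \<Longrightarrow> subdiv (a + c) (b + c) (map (\<lambda>t. t + c) xs)"
  unfolding subdiv_def by (auto simp: hd_map last_map sorted_map)

lemma polygon_length_shift: "polygon_length (map (\<lambda>t. t + of_int n) xs) = polygon_length xs"
  by (induction xs rule: polygon_length.induct) (auto simp: G_periodic_int)

lemma polygon_length_le_projection:
  assumes "\<And>t1 t2. t1 \<in> set xs \<Longrightarrow> t2 \<in> set xs \<Longrightarrow> t1 \<le> t2 \<Longrightarrow> k * norm (G t2 - G t1) \<le> (G t2 - G t1) \<bullet> E"
    and "sorted xs" "xs \<noteq> []"
  shows "k * polygon_length xs \<le> (G (last xs) - G (hd xs)) \<bullet> E"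
  using assms
proof (induction xs rule: polygon_length.induct)
  case (1 x y xs)
  then have "k * polygon_length (y # xs) \<le> (G (last (y # xs)) - G y) \<bullet> E"
    and "k * dist (G x) (G y) \<le> (G y - G x) \<bullet> E"
    by (auto simp: dist_norm norm_minus_commute)
  then show ?case by (simp add: distrib_left inner_diff_left)
qed simp_all

definition arc_len :: "real \<Rightarrow> real \<Rightarrow> real" where
  "arc_len a b = Sup {polygon_length xs | xs. subdiv a b xs}"

lemma arc_len_least: "a \<le> b \<Longrightarrow> (\<And>xs. subdiv a b xs \<Longrightarrow> polygon_length xs \<le> M) \<Longrightarrow> arc_len a b \<le> M"
  unfolding arc_len_def by (rule cSup_least) (use subdiv_two in auto)

text \<open>An arc that stays within \<open>\<rho> \<le> \<tau> / 3\<close> of its starting point makes angles at most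
  \<open>\<kappa> = 3 \<rho> / (2 \<tau>)\<close> with its end-to-end chord. It is therefore a graph over that chord, and its
  length is at most \<open>|chord| / (1 - \<kappa>\<^sup>2)\<close>.\<close>

context
  fixes a b \<rho> :: real
  assumes ab: "a < b" "b - a < 1"
    and near_a: "\<And>t. t \<in> {a..b} \<Longrightarrow> dist (G t) (G a) \<le> \<rho>"
    and small: "3 * \<rho> \<le> \<tau>"
begin

lemma flat_arc_chord_projection_abs:
  assumes t: "t \<in> {a..b}" "t' \<in> {a..b}"
  shows "(1 - (3 * \<rho> / (2 * \<tau>))^2) * norm (G t' - G t) \<le> \<bar>(G t' - G t) \<bullet> secant (G b) (G a)\<bar>"
proof (cases "G t' = G t")
  case False
  define E where "E = secant (G b) (G a)"
  define c where "c = secant (G t') (G t) \<bullet> E"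
  have "G b \<noteq> G a" using G_inj[of b a] ab by auto
  then have "sin_angle (secant (G t') (G t)) E \<le> (dist (G t') (G b) + dist (G t) (G a)) / (2 * \<tau>)"
    unfolding E_def using False by (intro sin_angle_secants) auto
  also have "\<dots> \<le> 3 * \<rho> / (2 * \<tau>)"
    using near_a[OF t(1)] near_a[OF t(2)] near_a[of b] ab dist_triangle[of "G t'" "G b" "G a"] tau_pos
    by (intro divide_right_mono) (auto simp: dist_commute)
  finally have "sqrt (1 - c^2) \<le> 3 * \<rho> / (2 * \<tau>)" by (simp add: sin_angle_def c_def)
  moreover have "c^2 \<le> 1"
    unfolding c_def E_def using False \<open>G b \<noteq> G a\<close> by (intro inner_unit_sq_le_1) (auto simp: norm_secant)
  ultimately have "1 - (3 * \<rho> / (2 * \<tau>))^2 \<le> c^2"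
    by (smt (verit) real_sqrt_ge_zero real_sqrt_pow2 power_mono)
  also have "c^2 \<le> \<bar>c\<bar>"
    using \<open>c^2 \<le> 1\<close> by (metis abs_ge_zero abs_square_le_1 mult_right_le_one_le power2_abs power2_eq_square)
  finally have "(1 - (3 * \<rho> / (2 * \<tau>))^2) * norm (G t' - G t) \<le> \<bar>c\<bar> * norm (G t' - G t)"
    by (simp add: mult_right_mono)
  also have "\<bar>c\<bar> * norm (G t' - G t) = \<bar>(G t' - G t) \<bullet> E\<bar>"
    using False by (simp add: c_def secant_def abs_mult)
  finally show ?thesis by (simp add: E_def)
qed simp

lemma flat_arc_factor_pos: "0 < 1 - (3 * \<rho> / (2 * \<tau>))^2"
proof -
  have "0 \<le> \<rho>" using near_a[of a] ab by auto
  then have "(3 * \<rho> / (2 * \<tau>))^2 \<le> (1 / 2)^2"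
    using small tau_pos by (intro power_mono) (auto simp: divide_le_eq)
  then show ?thesis by (simp add: power2_eq_square)
qed

lemma flat_arc_projection_less:
  assumes "a \<le> t1" "t1 < t2" "t2 \<le> b"
  shows "(G t1 - G a) \<bullet> secant (G b) (G a) < (G t2 - G a) \<bullet> secant (G b) (G a)"
proof -
  define u where "u t = (G t - G a) \<bullet> secant (G b) (G a)" for t
  have inj: "inj_on u {a..b}"
  proof (rule inj_onI)
    fix t t' assume t: "t \<in> {a..b}" "t' \<in> {a..b}" and "u t = u t'"
    then have "(G t' - G t) \<bullet> secant (G b) (G a) = 0" by (simp add: u_def inner_diff_left)
    then have "G t' = G t"
      using flat_arc_chord_projection_abs[OF t] flat_arc_factor_pos
      by (simp add: mult_le_0_iff not_le[symmetric])
    moreover have "\<bar>t' - t\<bar> < 1" using t ab by (auto simp: abs_if)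
    ultimately show "t = t'" using G_inj by simp
  qed
  have cont: "continuous_on {a..b} u"
    unfolding u_def by (intro continuous_intros continuous_on_subset[OF continuous_G]) auto
  have "u a = 0" "0 < u b" using G_inj[of b a] ab by (auto simp: u_def inner_secant)
  have from_a: "u a < u t" if "a < t" "t \<le> b" for t
    using continuous_inj_imp_mono[of a t b u] that cont inj \<open>u a = 0\<close> \<open>0 < u b\<close>
    by (cases "t = b") auto
  show ?thesis
  proof (cases "t1 = a")
    case False
    have "continuous_on {a..t2} u" "inj_on u {a..t2}"
      using assms by (auto intro: continuous_on_subset[OF cont] inj_on_subset[OF inj])
    then show ?thesis
      using continuous_inj_imp_mono[of a t1 t2 u] from_a[of t2] assms False by (auto simp: u_def)
  qed (use from_a assms in \<open>auto simp: u_def\<close>)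
qed

lemma flat_arc_chord_projection:
  assumes "a \<le> t1" "t1 \<le> t2" "t2 \<le> b"
  shows "(1 - (3 * \<rho> / (2 * \<tau>))^2) * norm (G t2 - G t1) \<le> (G t2 - G t1) \<bullet> secant (G b) (G a)"
proof (cases "t1 = t2")
  case False
  then have "(G t1 - G a) \<bullet> secant (G b) (G a) < (G t2 - G a) \<bullet> secant (G b) (G a)"
    using assms by (intro flat_arc_projection_less) auto
  then have "0 < (G t2 - G t1) \<bullet> secant (G b) (G a)" by (simp add: inner_diff_left)
  then show ?thesis using flat_arc_chord_projection_abs[of t1 t2] assms by auto
qed simp

lemma flat_arc_polygon_length:
  assumes "subdiv a b xs"
  shows "(1 - (3 * \<rho> / (2 * \<tau>))^2) * polygon_length xs \<le> dist (G a) (G b)"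
proof -
  have "(1 - (3 * \<rho> / (2 * \<tau>))^2) * polygon_length xs
        \<le> (G (last xs) - G (hd xs)) \<bullet> secant (G b) (G a)"
    using assms subdiv_atLeastAtMost[OF assms]
    by (intro polygon_length_le_projection flat_arc_chord_projection) (auto simp: subdiv_def)
  also have "\<dots> = dist (G a) (G b)"
    using assms by (simp add: subdiv_def inner_secant dist_norm norm_minus_commute)
  finally show ?thesis .
qed

lemma flat_arc_arc_len: "(1 - (3 * \<rho> / (2 * \<tau>))^2) * arc_len a b \<le> dist (G a) (G b)"
proof -
  have "arc_len a b \<le> dist (G a) (G b) / (1 - (3 * \<rho> / (2 * \<tau>))^2)"
    using ab flat_arc_polygon_length flat_arc_factor_pos
    by (intro arc_len_least) (auto simp: le_divide_eq mult.commute)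
  then show ?thesis using flat_arc_factor_pos by (simp add: le_divide_eq mult.commute)
qed

end

definition flat_step :: real where
  "flat_step = (SOME d. 0 < d \<and> d < 1 \<and> (\<forall>s t. \<bar>s - t\<bar> \<le> d \<longrightarrow> dist (G s) (G t) \<le> \<tau> / 3))"

lemma flat_step: "0 < flat_step" "flat_step < 1" "\<bar>s - t\<bar> \<le> flat_step \<Longrightarrow> dist (G s) (G t) \<le> \<tau> / 3"
proof -
  have "\<tau> / 3 > 0" using tau_pos by simp
  with periodic_uniformly_continuous[OF continuous_G G_periodic]
  obtain d where d: "d > 0" "\<And>s t. dist s t < d \<Longrightarrow> dist (G s) (G t) < \<tau> / 3"
    by (rule uniformly_continuous_onE) (rule that, auto)
  then have "0 < min (d / 2) (1 / 2) \<and> min (d / 2) (1 / 2) < 1 \<and>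
      (\<forall>s t. \<bar>s - t\<bar> \<le> min (d / 2) (1 / 2) \<longrightarrow> dist (G s) (G t) \<le> \<tau> / 3)"
    by (auto simp: dist_real_def less_imp_le)
  then have "0 < flat_step \<and> flat_step < 1 \<and> (\<forall>s t. \<bar>s - t\<bar> \<le> flat_step \<longrightarrow> dist (G s) (G t) \<le> \<tau> / 3)"
    unfolding flat_step_def by (rule someI)
  then show "0 < flat_step" "flat_step < 1" "\<bar>s - t\<bar> \<le> flat_step \<Longrightarrow> dist (G s) (G t) \<le> \<tau> / 3"
    by auto
qed

lemma polygon_length_short:
  assumes "a \<le> b" "b - a \<le> flat_step" "subdiv a b xs"
  shows "polygon_length xs \<le> 2 * dist (G a) (G b)"
proof (cases "a = b")
  case False
  have "(1 - (3 * (\<tau> / 3) / (2 * \<tau>))^2) * polygon_length xs \<le> dist (G a) (G b)"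
    using assms False flat_step by (intro flat_arc_polygon_length[of a b]) auto
  moreover have "1 - (3 * (\<tau> / 3) / (2 * \<tau>))^2 = 3 / 4" using tau_pos by (simp add: power2_eq_square)
  ultimately have "3 / 4 * polygon_length xs \<le> dist (G a) (G b)" by (simp only:)
  then show ?thesis using polygon_length_nonneg[of xs] by linarith
qed (use assms polygon_length_degenerate in simp)

lemma polygon_length_bounded: "a \<le> b \<Longrightarrow> bdd_above {polygon_length xs | xs. subdiv a b xs}"
proof -
  have "polygon_length xs \<le> real N * \<tau>"
    if "a \<le> b" "b - a \<le> real N * flat_step" "subdiv a b xs" for N a b xs
    using that
  proof (induction N arbitrary: a xs)
    case 0
    then show ?case using polygon_length_degenerate by simp
  next
    case (Suc N)
    have short: "polygon_length ys \<le> \<tau>" if "a \<le> c" "c - a \<le> flat_step" "subdiv a c ys" for c ys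
      using polygon_length_short[OF that] flat_step(3)[of a c] that tau_pos by simp
    show ?case
    proof (cases "b - a \<le> flat_step")
      case True
      moreover have "\<tau> \<le> real (Suc N) * \<tau>" using tau_pos by simp
      ultimately show ?thesis using short[of b xs] Suc.prems by linarith
    next
      case False
      then obtain ys zs where "subdiv a (a + flat_step) ys" "subdiv (a + flat_step) b zs"
        "polygon_length xs \<le> polygon_length ys + polygon_length zs"
        using subdiv_split[OF Suc.prems(3), of "a + flat_step"] flat_step(1) by auto
      moreover have "polygon_length zs \<le> real N * \<tau>"
        using Suc.prems False \<open>subdiv (a + flat_step) b zs\<close> by (intro Suc.IH) (auto simp: algebra_simps)
      moreover have "polygon_length ys \<le> \<tau>" using short[of "a + flat_step" ys] flat_step(1) calculation by simp
      ultimately show ?thesis by (simp add: algebra_simps)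
    qed
  qed
  moreover obtain N :: nat where "(b - a) / flat_step \<le> real N" by (meson real_arch_simple)
  then have "b - a \<le> real N * flat_step" using flat_step(1) by (simp add: divide_le_eq)
  ultimately show "a \<le> b \<Longrightarrow> ?thesis" unfolding bdd_above_def by blast
qed

lemma polygon_length_le_arc_len: "a \<le> b \<Longrightarrow> subdiv a b xs \<Longrightarrow> polygon_length xs \<le> arc_len a b"
  unfolding arc_len_def by (rule cSup_upper) (auto intro: polygon_length_bounded)

lemma dist_le_arc_len: "a \<le> b \<Longrightarrow> dist (G a) (G b) \<le> arc_len a b"
  using polygon_length_le_arc_len[OF _ subdiv_two, of a b] by simp

lemma arc_len_nonneg: "a \<le> b \<Longrightarrow> 0 \<le> arc_len a b"
  using dist_le_arc_len[of a b] zero_le_dist[of "G a" "G b"] by linarith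

lemma arc_len_refl: "arc_len a a = 0"
  using arc_len_least[of a a 0] arc_len_nonneg[of a a] polygon_length_degenerate by fastforce

lemma arc_len_add:
  assumes "a \<le> b" "b \<le> c"
  shows "arc_len a c = arc_len a b + arc_len b c"
proof (rule antisym)
  show "arc_len a c \<le> arc_len a b + arc_len b c"
  proof (rule arc_len_least)
    fix xs assume "subdiv a c xs"
    then obtain ys zs where "subdiv a b ys" "subdiv b c zs"
      "polygon_length xs \<le> polygon_length ys + polygon_length zs"
      using subdiv_split assms by blast
    then show "polygon_length xs \<le> arc_len a b + arc_len b c"
      using polygon_length_le_arc_len[OF assms(1)] polygon_length_le_arc_len[OF assms(2)] by fastforce
  qed (use assms in simp)
next
  have sum: "polygon_length ys + polygon_length zs \<le> arc_len a c" if "subdiv a b ys" "subdiv b c zs" for ys zs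
    using subdiv_append[OF that] polygon_length_le_arc_len[of a c] assms by (metis order_trans)
  have "arc_len a b \<le> arc_len a c - arc_len b c"
  proof (rule arc_len_least[OF assms(1)])
    fix ys assume "subdiv a b ys"
    then have "polygon_length zs \<le> arc_len a c - polygon_length ys" if "subdiv b c zs" for zs
      using sum[of ys zs] that by simp
    then have "arc_len b c \<le> arc_len a c - polygon_length ys" by (rule arc_len_least[OF assms(2)])
    then show "polygon_length ys \<le> arc_len a c - arc_len b c" by simp
  qed
  then show "arc_len a b + arc_len b c \<le> arc_len a c" by simp
qed

lemma arc_len_shift: "arc_len (a + of_int n) (b + of_int n) = arc_len a b"
proof -
  have "{polygon_length xs | xs. subdiv (a + of_int n) (b + of_int n) xs} = {polygon_length xs | xs. subdiv a b xs}"
  proof safe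
    fix xs assume "subdiv (a + of_int n) (b + of_int n) xs"
    then have "subdiv a b (map (\<lambda>t. t + of_int (- n)) xs)"
      using subdiv_shift[of "a + of_int n" "b + of_int n" xs "of_int (- n)"] by simp
    then show "\<exists>ys. polygon_length xs = polygon_length ys \<and> subdiv a b ys"
      using polygon_length_shift by metis
  next
    fix xs assume "subdiv a b xs"
    then show "\<exists>ys. polygon_length xs = polygon_length ys \<and> subdiv (a + of_int n) (b + of_int n) ys"
      using subdiv_shift polygon_length_shift by metis
  qed
  then show ?thesis unfolding arc_len_def by simp
qed

lemma arc_len_short: "a \<le> b \<Longrightarrow> b - a \<le> flat_step \<Longrightarrow> arc_len a b \<le> 2 * dist (G a) (G b)"
  by (rule arc_len_least) (auto intro: polygon_length_short)

lemma arc_len_pos: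
  assumes "a < b"
  shows "0 < arc_len a b"
proof -
  define c where "c = min b (a + 1 / 2)"
  have c: "a < c" "c \<le> b" "\<bar>c - a\<bar> < 1" using assms by (auto simp: c_def)
  then have "G a \<noteq> G c" using G_inj[of c a] by auto
  then have "0 < arc_len a c" using dist_le_arc_len[of a c] c(1) by (metis dist_pos_lt less_imp_le order_less_le_trans)
  moreover have "arc_len a b = arc_len a c + arc_len c b" using c by (intro arc_len_add) auto
  moreover have "0 \<le> arc_len c b" using c(2) by (rule arc_len_nonneg)
  ultimately show ?thesis by simp
qed

definition loop_length :: real where
  "loop_length = arc_len 0 1"

definition arclength :: "real \<Rightarrow> real" where
  "arclength t = (if 0 \<le> t then arc_len 0 t else - arc_len t 0)"

lemma loop_length_pos: "loop_length > 0"
  unfolding loop_length_def by (rule arc_len_pos) simp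

lemma arclength_diff:
  assumes "a \<le> b"
  shows "arclength b - arclength a = arc_len a b"
proof -
  consider "0 \<le> a" | "a < 0" "0 \<le> b" | "b < 0" by linarith
  then show ?thesis
  proof cases
    case 1
    then show ?thesis using assms arc_len_add[of 0 a b] by (simp add: arclength_def)
  next
    case 2
    then show ?thesis using arc_len_add[of a 0 b] by (simp add: arclength_def)
  next
    case 3
    then show ?thesis using assms arc_len_add[of a b 0] by (simp add: arclength_def)
  qed
qed

lemma arc_len_period: "arc_len t (t + 1) = loop_length"
proof -
  define f where "f = t - \<lfloor>t\<rfloor>"
  have f: "0 \<le> f" "f \<le> 1" unfolding f_def by linarith+
  have "arc_len t (t + 1) = arc_len f (f + 1)"
    using arc_len_shift[where a = f and b = "f + 1" and n = "\<lfloor>t\<rfloor>"] by (simp add: f_def)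
  also have "\<dots> = arc_len f 1 + arc_len 1 (f + 1)" using f by (intro arc_len_add) auto
  also have "arc_len 1 (f + 1) = arc_len 0 f" using arc_len_shift[where a = 0 and b = f and n = 1] by simp
  also have "arc_len f 1 + arc_len 0 f = arc_len 0 1" using arc_len_add[of 0 f 1] f by simp
  finally show ?thesis by (simp add: loop_length_def)
qed

lemma arclength_period: "arclength (t + 1) = arclength t + loop_length"
  using arclength_diff[of t "t + 1"] arc_len_period[of t] by simp

lemma strict_mono_arclength: "strict_mono arclength"
proof (rule strict_monoI)
  fix a b :: real assume "a < b"
  then show "arclength a < arclength b" using arclength_diff[of a b] arc_len_pos[of a b] by simp
qed

lemma continuous_arclength: "continuous_on UNIV arclength"
  unfolding continuous_on_eq_continuous_at[OF open_UNIV]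
proof (intro ballI continuous_at_eps_delta[THEN iffD2] allI impI)
  fix t e :: real assume "e > 0"
  then obtain d where "d > 0" and d: "\<And>x. dist x t < d \<Longrightarrow> dist (G x) (G t) < e / 2"
    using continuous_G unfolding continuous_on_eq_continuous_at[OF open_UNIV] continuous_at_eps_delta
    by (meson UNIV_I half_gt_zero)
  have "dist (arclength x) (arclength t) < e" if "dist x t < min d flat_step" for x
  proof -
    have "dist (arclength x) (arclength t) \<le> 2 * dist (G x) (G t)"
      using that arc_len_short[of x t] arc_len_short[of t x] arclength_diff[of x t] arclength_diff[of t x]
        arc_len_nonneg[of x t] arc_len_nonneg[of t x]
      by (cases "x \<le> t") (auto simp: dist_real_def dist_commute)
    then show ?thesis using d[of x] that by simp
  qed
  then show "\<exists>d>0. \<forall>x. dist x t < d \<longrightarrow> dist (arclength x) (arclength t) < e"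
    using \<open>d > 0\<close> flat_step(1) by (metis min_less_iff_conj)
qed

lemma arclength_of_nat: "arclength (real n) = real n * loop_length" "arclength (- real n) = - real n * loop_length"
proof (induction n)
  case (Suc n)
  show "arclength (real (Suc n)) = real (Suc n) * loop_length"
    using arclength_period[of "real n"] Suc by (simp add: algebra_simps)
  show "arclength (- real (Suc n)) = - real (Suc n) * loop_length"
    using arclength_period[of "- real (Suc n)"] Suc by (simp add: algebra_simps)
qed (simp_all add: arclength_def arc_len_refl)

lemma surj_arclength: "surj arclength"
proof -
  have "y \<in> range arclength" for y
  proof -
    obtain n :: nat where "\<bar>y\<bar> / loop_length \<le> real n" by (meson real_arch_simple)
    then have "arclength (- real n) \<le> y" "y \<le> arclength (real n)"
      using arclength_of_nat[of n] loop_length_pos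
      by (auto simp: divide_le_eq abs_le_iff)
    then show ?thesis
      using IVT'[of arclength "- real n" y "real n"] continuous_arclength
      by (auto intro: continuous_on_subset)
  qed
  then show ?thesis by blast
qed

lemma arclength_inv [simp]: "arclength (inv arclength y) = y"
  by (rule surj_f_inv_f[OF surj_arclength])

lemma inv_arclength [simp]: "inv arclength (arclength t) = t"
  by (rule inv_f_f[OF strict_mono_imp_inj_on[OF strict_mono_arclength, simplified]])

lemma inv_arclength_le_iff [simp]: "inv arclength a \<le> inv arclength b \<longleftrightarrow> a \<le> b"
  by (metis arclength_inv strict_mono_less_eq[OF strict_mono_arclength])

lemma inv_arclength_less_iff [simp]: "inv arclength a < inv arclength b \<longleftrightarrow> a < b"
  by (metis arclength_inv strict_mono_less[OF strict_mono_arclength])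

lemma inv_arclength_period: "inv arclength (y + loop_length) = inv arclength y + 1"
  by (metis arclength_inv arclength_period inv_arclength)

definition arc_param :: "real \<Rightarrow> real^3" where
  "arc_param s = G (inv arclength (loop_length * s))"

lemma arc_len_arc_param:
  "s \<le> s' \<Longrightarrow> arc_len (inv arclength (loop_length * s)) (inv arclength (loop_length * s')) = loop_length * (s' - s)"
  using arclength_diff[of "inv arclength (loop_length * s)" "inv arclength (loop_length * s')"] loop_length_pos
  by (simp add: algebra_simps)

lemma dist_arc_param_le: "dist (arc_param s) (arc_param s') \<le> loop_length * \<bar>s' - s\<bar>"
proof -
  have "dist (arc_param s) (arc_param s') \<le> loop_length * (s' - s)" if "s \<le> s'" for s s'
    using dist_le_arc_len arc_len_arc_param[OF that] that loop_length_pos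
    by (metis arc_param_def inv_arclength_le_iff mult_left_mono less_imp_le)
  from this[of s s'] this[of s' s] show ?thesis by (cases "s \<le> s'") (auto simp: dist_commute)
qed

end

section \<open>The constant-speed parametrization is C^{1,1}\<close>

lemma norm_diff_scaleR_unit_le:
  fixes w E :: "'a::real_inner"
  assumes E: "norm E = 1" and \<kappa>: "0 \<le> \<kappa>" "\<kappa> \<le> 1" and "0 < l"
    and lower: "(1 - \<kappa>^2) * l \<le> norm w" and upper: "norm w \<le> l"
    and angle: "(1 - \<kappa>^2) * norm w \<le> w \<bullet> E"
  shows "norm (w - l *\<^sub>R E) \<le> 2 * l * \<kappa>"
proof -
  have "(w - l *\<^sub>R E) \<bullet> (w - l *\<^sub>R E) = w \<bullet> w - 2 * l * (w \<bullet> E) + l^2"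
    using E by (simp add: inner_diff_left inner_diff_right inner_commute norm_eq_1 power2_eq_square)
  then have "(norm (w - l *\<^sub>R E))^2 = (norm w)^2 - 2 * l * (w \<bullet> E) + l^2"
    by (simp add: power2_norm_eq_inner)
  also have "\<dots> \<le> (norm w)^2 - 2 * l * ((1 - \<kappa>^2) * norm w) + l^2"
    using angle \<open>0 < l\<close> by simp
  also have "\<dots> = (l - norm w)^2 + 2 * l * norm w * \<kappa>^2"
    by (simp add: power2_eq_square algebra_simps)
  also have "\<dots> \<le> (\<kappa>^2 * l)^2 + 2 * l * l * \<kappa>^2"
    using lower upper \<open>0 < l\<close> by (intro add_mono power_mono mult_right_mono mult_left_mono) (auto simp: algebra_simps)
  also have "\<dots> \<le> (2 * l * \<kappa>)^2"
  proof -
    have "\<kappa>^2 * \<kappa>^2 \<le> \<kappa>^2" using \<kappa> by (intro mult_left_le power_le_one) auto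
    then have "(\<kappa>^2 * l)^2 \<le> \<kappa>^2 * l^2" by (simp add: power_mult_distrib mult_right_mono flip: power2_eq_square)
    moreover have "2 * l * l * \<kappa>^2 = 2 * (\<kappa>^2 * l^2)" "(2 * l * \<kappa>)^2 = 4 * (\<kappa>^2 * l^2)"
      by (simp_all add: power2_eq_square)
    moreover have "0 \<le> \<kappa>^2 * l^2" by simp
    ultimately show ?thesis by linarith
  qed
  finally show ?thesis by (rule power2_le_imp_le) (use \<kappa> \<open>0 < l\<close> in simp)
qed

lemma Cauchy_if_dist_le_null_sum:
  fixes X :: "nat \<Rightarrow> 'a::metric_space"
  assumes "e \<longlonglongrightarrow> 0" and "\<And>m n. dist (X m) (X n) \<le> e m + e n"
  shows "Cauchy X"
proof (rule metric_CauchyI)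
  fix \<epsilon> :: real assume "0 < \<epsilon>"
  then obtain M where "\<forall>n\<ge>M. \<bar>e n\<bar> < \<epsilon> / 2"
    using assms(1) LIMSEQ_D[of e 0 "\<epsilon> / 2"] by auto
  then have "\<forall>m\<ge>M. \<forall>n\<ge>M. dist (X m) (X n) < \<epsilon>"
    using assms(2) by (smt (verit) field_sum_of_halves)
  then show "\<exists>M. \<forall>m\<ge>M. \<forall>n\<ge>M. dist (X m) (X n) < \<epsilon>" by blast
qed

lemma nonpos_if_le_linear_near_0:
  fixes x C c :: real
  assumes "0 < c" and "\<And>h. 0 < h \<Longrightarrow> h \<le> c \<Longrightarrow> x \<le> C * h"
  shows "x \<le> 0"
proof -
  have "((\<lambda>h. C * h) \<longlongrightarrow> C * 0) (at_right 0)" by (intro tendsto_intros)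
  moreover have "\<forall>\<^sub>F h in at_right 0. x \<le> C * h"
    using assms by (auto simp: eventually_at_right_field intro!: exI[of _ c])
  ultimately show ?thesis by (simp add: tendsto_lowerbound)
qed

lemma periodic_image_unit_interval:
  fixes f :: "real \<Rightarrow> 'a"
  assumes "\<And>t. f (t + 1) = f t"
  shows "f ` {0..1} = range f"
proof -
  have "f t \<in> f ` {0..1}" for t
  proof
    show "f t = f (t - \<lfloor>t\<rfloor>)" using periodic_shift_int[of f, OF assms, of "t - \<lfloor>t\<rfloor>" "\<lfloor>t\<rfloor>"] by simp
    show "t - \<lfloor>t\<rfloor> \<in> {0..1}" by simp linarith
  qed
  then show ?thesis by blast
qed

context thick_loop
begin

definition max_step :: real where
  "max_step = min (1 / 2) (\<tau> / (3 * loop_length))"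

lemma max_step_pos: "0 < max_step"
  using tau_pos loop_length_pos by (simp add: max_step_def)

lemma arc_param_flat:
  assumes "s < s'" "s' - s \<le> max_step"
  defines "\<kappa> \<equiv> 3 * loop_length * (s' - s) / (2 * \<tau>)"
  shows "(1 - \<kappa>^2) * (loop_length * (s' - s)) \<le> dist (arc_param s) (arc_param s')"
    and "\<And>s1 s2. s \<le> s1 \<Longrightarrow> s1 \<le> s2 \<Longrightarrow> s2 \<le> s' \<Longrightarrow>
      (1 - \<kappa>^2) * norm (arc_param s2 - arc_param s1)
        \<le> (arc_param s2 - arc_param s1) \<bullet> secant (arc_param s') (arc_param s)"
proof -
  define t where "t u = inv arclength (loop_length * u)" for u
  define \<rho> where "\<rho> = loop_length * (s' - s)"
  have t_le: "t u \<le> t u' \<longleftrightarrow> u \<le> u'" for u u' using loop_length_pos by (simp add: t_def)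
  have ab: "t s < t s'" using assms(1) loop_length_pos by (simp add: t_def)
  have len: "arc_len (t s) (t s') = \<rho>" using arc_len_arc_param[of s s'] assms(1) by (simp add: t_def \<rho>_def)
  have "\<rho> \<le> loop_length / 2" "3 * \<rho> \<le> \<tau>"
    using assms(2) loop_length_pos by (auto simp: \<rho>_def max_step_def le_divide_eq mult_ac)
  have b1: "t s' - t s < 1"
  proof (rule ccontr)
    assume "\<not> t s' - t s < 1"
    then have "arc_len (t s) (t s') = loop_length + arc_len (t s + 1) (t s')" "0 \<le> arc_len (t s + 1) (t s')"
      using arc_len_add[of "t s" "t s + 1" "t s'"] arc_len_period[of "t s"] arc_len_nonneg[of "t s + 1" "t s'"]
      by auto
    then show False using len \<open>\<rho> \<le> loop_length / 2\<close> loop_length_pos by linarith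
  qed
  have near: "dist (G u) (G (t s)) \<le> \<rho>" if "u \<in> {t s..t s'}" for u
  proof -
    have "dist (G u) (G (t s)) \<le> arc_len (t s) u" using dist_le_arc_len[of "t s" u] that by (simp add: dist_commute)
    also have "\<dots> \<le> arc_len (t s) (t s')"
      using arc_len_add[of "t s" u "t s'"] arc_len_nonneg[of u "t s'"] that by simp
    finally show ?thesis using len by simp
  qed
  note flat = ab b1 near \<open>3 * \<rho> \<le> \<tau>\<close>
  show "(1 - \<kappa>^2) * (loop_length * (s' - s)) \<le> dist (arc_param s) (arc_param s')"
    using flat_arc_arc_len[OF flat] len by (simp add: \<kappa>_def \<rho>_def arc_param_def t_def mult.assoc)
  fix s1 s2 assume "s \<le> s1" "s1 \<le> s2" "s2 \<le> s'"
  then show "(1 - \<kappa>^2) * norm (arc_param s2 - arc_param s1)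
      \<le> (arc_param s2 - arc_param s1) \<bullet> secant (arc_param s') (arc_param s)"
    using flat_arc_chord_projection[OF flat, of "t s1" "t s2"] t_le
    by (simp add: \<kappa>_def \<rho>_def arc_param_def t_def mult.assoc)
qed

lemma arc_param_step_bound:
  assumes "0 \<le> s' - s" "s' - s \<le> max_step"
  shows "0 \<le> 3 * loop_length * (s' - s) / (2 * \<tau>)" "3 * loop_length * (s' - s) / (2 * \<tau>) \<le> 1 / 2"
proof -
  have "loop_length * (s' - s) \<le> \<tau> / 3"
    using assms loop_length_pos by (simp add: max_step_def le_divide_eq mult_ac)
  then show "0 \<le> 3 * loop_length * (s' - s) / (2 * \<tau>)" "3 * loop_length * (s' - s) / (2 * \<tau>) \<le> 1 / 2"
    using assms loop_length_pos tau_pos by simp_all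
qed

lemma arc_param_neq:
  assumes "s < s'" "s' - s \<le> max_step"
  shows "arc_param s' \<noteq> arc_param s"
proof -
  define \<kappa> where "\<kappa> = 3 * loop_length * (s' - s) / (2 * \<tau>)"
  have "0 \<le> s' - s" "s' - s \<le> max_step" using assms by auto
  from arc_param_step_bound[OF this] have "\<kappa>^2 \<le> (1 / 2)^2"
    by (intro power_mono) (simp_all add: \<kappa>_def)
  then have "0 < (1 - \<kappa>^2) * (loop_length * (s' - s))"
    using assms loop_length_pos by (simp add: power2_eq_square)
  then show ?thesis using arc_param_flat(1)[OF assms] by (auto simp: \<kappa>_def)
qed

definition quot_const :: real where
  "quot_const = 3 * loop_length^2 / \<tau>"

lemma quot_const_pos: "0 < quot_const"
  using loop_length_pos tau_pos by (simp add: quot_const_def)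

definition diff_quot :: "real \<Rightarrow> real \<Rightarrow> real^3" where
  "diff_quot s h = (arc_param (s + h) - arc_param s) /\<^sub>R h"

text \<open>Both the existence of the derivative and its Lipschitz bound come from comparing difference
  quotients with the secant of a common short window.\<close>

lemma diff_quot_near_secant:
  assumes pq: "p < q" "q - p \<le> max_step" and h: "s \<in> {p..q}" "s + h \<in> {p..q}" "h \<noteq> 0"
  shows "norm (diff_quot s h - loop_length *\<^sub>R secant (arc_param q) (arc_param p)) \<le> quot_const * (q - p)"
proof -
  define \<kappa> where "\<kappa> = 3 * loop_length * (q - p) / (2 * \<tau>)"
  define E where "E = secant (arc_param q) (arc_param p)"
  have "0 \<le> q - p" "q - p \<le> max_step" using pq by auto
  from arc_param_step_bound[OF this] have \<kappa>: "0 \<le> \<kappa>" "\<kappa> \<le> 1 / 2" by (simp_all add: \<kappa>_def)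
  have "norm E = 1" using arc_param_neq[OF pq] by (simp add: E_def norm_secant)
  have near: "norm ((arc_param t - arc_param s) /\<^sub>R (t - s) - loop_length *\<^sub>R E) \<le> 2 * loop_length * \<kappa>"
    if "p \<le> s" "s < t" "t \<le> q" for s t
  proof (rule norm_diff_scaleR_unit_le[OF \<open>norm E = 1\<close>])
    define v where "v = arc_param t - arc_param s"
    have nv: "norm (v /\<^sub>R (t - s)) = norm v / (t - s)" using that by (simp add: divide_inverse_commute)
    have "(1 - (3 * loop_length * (t - s) / (2 * \<tau>))^2) * (loop_length * (t - s)) \<le> norm v"
      using arc_param_flat(1)[of s t] that pq by (simp add: v_def dist_norm norm_minus_commute)
    moreover have "(3 * loop_length * (t - s) / (2 * \<tau>))^2 \<le> \<kappa>^2"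
      using that tau_pos loop_length_pos by (intro power_mono) (auto simp: \<kappa>_def divide_right_mono)
    then have "(1 - \<kappa>^2) * (loop_length * (t - s))
        \<le> (1 - (3 * loop_length * (t - s) / (2 * \<tau>))^2) * (loop_length * (t - s))"
      using that loop_length_pos by (intro mult_right_mono) auto
    ultimately have "(1 - \<kappa>^2) * (loop_length * (t - s)) \<le> norm v" by linarith
    then show "(1 - \<kappa>^2) * loop_length \<le> norm (v /\<^sub>R (t - s))"
      unfolding nv using that by (simp add: le_divide_eq mult_ac)
    show "norm (v /\<^sub>R (t - s)) \<le> loop_length"
      unfolding nv using dist_arc_param_le[of s t] that by (simp add: v_def dist_norm norm_minus_commute divide_le_eq)
    have "(1 - \<kappa>^2) * norm v \<le> v \<bullet> E"
      using arc_param_flat(2)[OF pq, of s t] that by (simp add: v_def E_def \<kappa>_def)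
    then show "(1 - \<kappa>^2) * norm (v /\<^sub>R (t - s)) \<le> (v /\<^sub>R (t - s)) \<bullet> E"
      unfolding nv using that by (simp add: divide_right_mono mult.assoc[symmetric] divide_inverse_commute)
  qed (use \<kappa> loop_length_pos in auto)
  have "2 * loop_length * \<kappa> = quot_const * (q - p)"
    using tau_pos by (simp add: \<kappa>_def quot_const_def power2_eq_square)
  moreover have "(arc_param s - arc_param (s + h)) /\<^sub>R (s - (s + h)) = diff_quot s h"
    by (simp add: diff_quot_def) (metis minus_diff_eq scaleR_minus_right)
  ultimately show ?thesis
    using near[of s "s + h"] near[of "s + h" s] h by (cases "h > 0") (auto simp: diff_quot_def E_def)
qed

lemma diff_quot_cauchy:
  assumes "h1 \<noteq> 0" "\<bar>h1\<bar> \<le> max_step / 2" "h2 \<noteq> 0" "\<bar>h2\<bar> \<le> max_step / 2"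
  shows "dist (diff_quot s h1) (diff_quot s h2) \<le> 2 * quot_const * (\<bar>h1\<bar> + \<bar>h2\<bar>)"
proof -
  define p where "p = min s (min (s + h1) (s + h2))"
  define q where "q = max s (max (s + h1) (s + h2))"
  have pq: "p < q" "q - p \<le> \<bar>h1\<bar> + \<bar>h2\<bar>" "q - p \<le> max_step"
    using assms unfolding p_def q_def by linarith+
  define w where "w = loop_length *\<^sub>R secant (arc_param q) (arc_param p)"
  have "s \<in> {p..q}" "s + h1 \<in> {p..q}" "s + h2 \<in> {p..q}" unfolding p_def q_def by auto
  then have "norm (diff_quot s h1 - w) \<le> quot_const * (q - p)" "norm (w - diff_quot s h2) \<le> quot_const * (q - p)"
    using diff_quot_near_secant[OF pq(1,3)] assms by (auto simp: w_def norm_minus_commute)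
  then have "dist (diff_quot s h1) (diff_quot s h2) \<le> quot_const * (q - p) + quot_const * (q - p)"
    unfolding dist_norm by (rule norm_diff_triangle_le)
  also have "\<dots> \<le> 2 * quot_const * (\<bar>h1\<bar> + \<bar>h2\<bar>)"
    using mult_left_mono[OF pq(2) less_imp_le[OF quot_const_pos]] by linarith
  finally show ?thesis .
qed

definition arc_deriv :: "real \<Rightarrow> real^3" where
  "arc_deriv s = lim (\<lambda>n. diff_quot s (max_step / 2 / real (Suc n)))"

lemma diff_quot_arc_deriv:
  assumes "h \<noteq> 0" "\<bar>h\<bar> \<le> max_step / 2"
  shows "norm (diff_quot s h - arc_deriv s) \<le> 2 * quot_const * \<bar>h\<bar>"
proof -
  define h' where "h' n = max_step / 2 / real (Suc n)" for n
  have h': "h' n \<noteq> 0" "\<bar>h' n\<bar> \<le> max_step / 2" for n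
    using max_step_pos by (auto simp: h'_def divide_le_eq)
  have "h' \<longlonglongrightarrow> 0" unfolding h'_def by (rule LIMSEQ_Suc[OF lim_const_over_n])
  then have "Cauchy (\<lambda>n. diff_quot s (h' n))"
    by (intro Cauchy_if_dist_le_null_sum[where e = "\<lambda>n. 2 * quot_const * \<bar>h' n\<bar>"] tendsto_eq_intros)
      (auto intro: diff_quot_cauchy[OF h' h', THEN order_trans] simp: algebra_simps)
  then have lim: "(\<lambda>n. diff_quot s (h' n)) \<longlonglongrightarrow> arc_deriv s"
    unfolding arc_deriv_def h'_def[symmetric] by (simp add: Cauchy_convergent_iff convergent_LIMSEQ_iff)
  have "(\<lambda>n. norm (diff_quot s h - diff_quot s (h' n))) \<longlonglongrightarrow> norm (diff_quot s h - arc_deriv s)"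
    by (intro tendsto_intros lim)
  moreover have "(\<lambda>n. 2 * quot_const * (\<bar>h\<bar> + \<bar>h' n\<bar>)) \<longlonglongrightarrow> 2 * quot_const * (\<bar>h\<bar> + \<bar>0\<bar>)"
    by (intro tendsto_intros \<open>h' \<longlonglongrightarrow> 0\<close>)
  moreover have "norm (diff_quot s h - diff_quot s (h' n)) \<le> 2 * quot_const * (\<bar>h\<bar> + \<bar>h' n\<bar>)" for n
    using diff_quot_cauchy[OF assms h'] by (simp add: dist_norm)
  ultimately show ?thesis by (intro LIMSEQ_le) auto
qed

lemma arc_param_has_derivative: "(arc_param has_vector_derivative arc_deriv s) (at s)"
  unfolding has_vector_derivative_def has_derivative_at_alt
proof (intro conjI allI impI bounded_linear_scaleR_left)
  fix e :: real assume "e > 0"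
  have "norm (arc_param y - arc_param s - (y - s) *\<^sub>R arc_deriv s) \<le> e * norm (y - s)"
    if "norm (y - s) < min (max_step / 2) (e / (2 * quot_const))" for y
  proof (cases "y = s")
    case False
    have "norm (diff_quot s (y - s) - arc_deriv s) \<le> e"
      using diff_quot_arc_deriv[of "y - s" s] False that quot_const_pos
      by (simp add: less_divide_eq mult.commute)
    then have "\<bar>y - s\<bar> * norm (diff_quot s (y - s) - arc_deriv s) \<le> e * \<bar>y - s\<bar>"
      using mult_right_mono[of _ e "\<bar>y - s\<bar>"] by (metis abs_ge_zero mult.commute)
    moreover have "arc_param y - arc_param s - (y - s) *\<^sub>R arc_deriv s = (y - s) *\<^sub>R (diff_quot s (y - s) - arc_deriv s)"
      using False by (simp add: diff_quot_def scaleR_diff_right)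
    ultimately show ?thesis by simp
  qed simp
  then show "\<exists>d>0. \<forall>y. norm (y - s) < d \<longrightarrow> norm (arc_param y - arc_param s - (y - s) *\<^sub>R arc_deriv s) \<le> e * norm (y - s)"
    using max_step_pos quot_const_pos \<open>e > 0\<close> by (intro exI[of _ "min (max_step / 2) (e / (2 * quot_const))"]) auto
qed

lemma diff_quot_near_loop_length:
  assumes "0 < h" "h \<le> max_step"
  shows "\<bar>norm (diff_quot s h) - loop_length\<bar> \<le> quot_const * h"
proof -
  have "norm (diff_quot s h - loop_length *\<^sub>R secant (arc_param (s + h)) (arc_param s)) \<le> quot_const * h"
    using diff_quot_near_secant[of s "s + h" s h] assms by simp
  moreover have "norm (loop_length *\<^sub>R secant (arc_param (s + h)) (arc_param s)) = loop_length"
    using arc_param_neq[of s "s + h"] assms loop_length_pos by (simp add: norm_secant)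
  ultimately show ?thesis using norm_triangle_ineq3 by (smt (verit))
qed

lemma norm_arc_deriv: "norm (arc_deriv s) = loop_length"
proof -
  have "\<bar>norm (arc_deriv s) - loop_length\<bar> \<le> 0"
  proof (rule nonpos_if_le_linear_near_0[of "max_step / 2"])
    fix h :: real assume h: "0 < h" "h \<le> max_step / 2"
    then have "\<bar>norm (arc_deriv s) - norm (diff_quot s h)\<bar> \<le> 2 * quot_const * h"
      using diff_quot_arc_deriv[of h s] norm_triangle_ineq3[of "diff_quot s h" "arc_deriv s"]
      by (simp add: abs_minus_commute)
    moreover have "\<bar>norm (diff_quot s h) - loop_length\<bar> \<le> quot_const * h"
      using diff_quot_near_loop_length h max_step_pos by simp
    ultimately show "\<bar>norm (arc_deriv s) - loop_length\<bar> \<le> 3 * quot_const * h" by linarith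
  qed (use max_step_pos in simp)
  then show ?thesis by simp
qed

lemma arc_deriv_lipschitz_near:
  assumes "s < t" "t - s \<le> max_step / 2"
  shows "norm (arc_deriv s - arc_deriv t) \<le> 2 * quot_const * (t - s)"
proof -
  have "norm (arc_deriv s - arc_deriv t) - 2 * quot_const * (t - s) \<le> 0"
  proof (rule nonpos_if_le_linear_near_0[of "max_step / 2"])
    fix h :: real assume h: "0 < h" "h \<le> max_step / 2"
    define w where "w = loop_length *\<^sub>R secant (arc_param (t + h)) (arc_param s)"
    have pq: "s < t + h" "t + h - s \<le> max_step" using assms h by auto
    have "norm (arc_deriv s - diff_quot s h) \<le> 2 * quot_const * h"
      "norm (diff_quot s h - w) \<le> quot_const * (t + h - s)"
      "norm (w - diff_quot t h) \<le> quot_const * (t + h - s)"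
      "norm (diff_quot t h - arc_deriv t) \<le> 2 * quot_const * h"
      using diff_quot_arc_deriv[of h] diff_quot_near_secant[OF pq, of s h] diff_quot_near_secant[OF pq, of t h]
        assms h by (auto simp: w_def norm_minus_commute)
    then have "norm (arc_deriv s - arc_deriv t) \<le> 2 * quot_const * h + quot_const * (t + h - s)
        + quot_const * (t + h - s) + 2 * quot_const * h"
      by (metis norm_diff_triangle_le)
    then show "norm (arc_deriv s - arc_deriv t) - 2 * quot_const * (t - s) \<le> 6 * quot_const * h"
      by (simp add: algebra_simps)
  qed (use max_step_pos in simp)
  then show ?thesis by simp
qed

lemma arc_deriv_lipschitz: "lipschitz_on (2 * quot_const + 4 * loop_length / max_step) UNIV arc_deriv"
proof -
  define K where "K = 2 * quot_const + 4 * loop_length / max_step"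
  have less: "norm (arc_deriv s - arc_deriv t) \<le> K * (t - s)" if "s < t" for s t
  proof (cases "t - s \<le> max_step / 2")
    case True
    have "2 * quot_const * (t - s) \<le> K * (t - s)"
      using loop_length_pos max_step_pos that by (intro mult_right_mono) (auto simp: K_def)
    then show ?thesis using arc_deriv_lipschitz_near[OF that True] by linarith
  next
    case False
    have "norm (arc_deriv s - arc_deriv t) \<le> 2 * loop_length"
      using norm_triangle_ineq4[of "arc_deriv s" "arc_deriv t"] by (simp add: norm_arc_deriv)
    also have "\<dots> = 4 * loop_length / max_step * (max_step / 2)" using max_step_pos by simp
    also have "\<dots> \<le> 4 * loop_length / max_step * (t - s)"
      using False loop_length_pos max_step_pos by (intro mult_left_mono) auto
    also have "\<dots> \<le> K * (t - s)"
      using quot_const_pos that by (intro mult_right_mono) (auto simp: K_def)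
    finally show ?thesis .
  qed
  then have "dist (arc_deriv s) (arc_deriv t) \<le> K * dist s t" for s t
    using less[of s t] less[of t s] by (cases s t rule: linorder_cases) (auto simp: dist_norm dist_real_def norm_minus_commute)
  moreover have "0 \<le> K" using quot_const_pos loop_length_pos max_step_pos by (simp add: K_def)
  ultimately show ?thesis unfolding K_def[symmetric] by (intro lipschitz_onI) auto
qed

lemma arc_param_periodic: "arc_param (s + 1) = arc_param s"
  by (simp add: arc_param_def distrib_left inv_arclength_period G_periodic)

lemma range_arc_param: "range arc_param = range G"
proof -
  have "G t = arc_param (arclength t / loop_length)" for t
    using loop_length_pos by (simp add: arc_param_def)
  then show ?thesis unfolding arc_param_def by blast
qed

lemma inj_on_arc_param: "inj_on arc_param {0..<1}"
proof (rule inj_onI)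
  fix s t assume st: "s \<in> {0..<1}" "t \<in> {0..<1}" "arc_param s = arc_param t"
  have "arclength 0 = 0" "arclength 1 = loop_length"
    by (simp_all add: arclength_def arc_len_refl loop_length_def)
  then have "inv arclength (loop_length * u) \<in> {0..<1}" if "u \<in> {0..<1}" for u
    using that loop_length_pos inv_arclength_le_iff[of 0 "loop_length * u"]
      inv_arclength_less_iff[of "loop_length * u" loop_length] by (metis atLeastLessThan_iff inv_arclength mult_less_cancel_left_pos mult_nonneg_nonneg less_imp_le mult.right_neutral)
  from this[OF st(1)] this[OF st(2)]
  have "\<bar>inv arclength (loop_length * s) - inv arclength (loop_length * t)\<bar> < 1"
    by (simp add: abs_less_iff)
  then have "inv arclength (loop_length * s) = inv arclength (loop_length * t)"
    using G_inj st(3) unfolding arc_param_def by blast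
  then have "arclength (inv arclength (loop_length * s)) = arclength (inv arclength (loop_length * t))"
    by (rule arg_cong)
  then show "s = t" using loop_length_pos by simp
qed

lemma C11_arc_param:
  "\<exists>\<gamma> \<gamma>' lam K. (\<forall>t. \<gamma> (t + 1) = \<gamma> t) \<and> inj_on \<gamma> {0..<1} \<and> \<gamma> ` {0..1} = range G \<and>
       (\<forall>t. (\<gamma> has_vector_derivative \<gamma>' t) (at t)) \<and>
       lam > 0 \<and> (\<forall>t. norm (\<gamma>' t) = lam) \<and>
       (\<forall>s t. norm (\<gamma>' s - \<gamma>' t) \<le> K * \<bar>s - t\<bar>)"
proof -
  have "arc_param ` {0..1} = range G"
    using periodic_image_unit_interval[of arc_param] arc_param_periodic range_arc_param by simp
  moreover have "\<forall>s t. norm (arc_deriv s - arc_deriv t)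
      \<le> (2 * quot_const + 4 * loop_length / max_step) * \<bar>s - t\<bar>"
    using arc_deriv_lipschitz unfolding lipschitz_on_def by (simp add: dist_norm dist_real_def)
  ultimately show ?thesis
    using arc_param_periodic inj_on_arc_param arc_param_has_derivative loop_length_pos norm_arc_deriv
    by blast
qed

end

section \<open>Links\<close>

lemma simple_loop_periodic_param:
  fixes g :: "real \<Rightarrow> 'a::t2_space"
  assumes "simple_path g" "pathfinish g = pathstart g"
  obtains G :: "real \<Rightarrow> 'a" where "continuous_on UNIV G" "\<And>t. G (t + 1) = G t"
    "\<And>s t. \<bar>s - t\<bar> < 1 \<Longrightarrow> G s = G t \<Longrightarrow> s = t" "range G = path_image g"
proof -
  obtain f h where hom: "homeomorphism (path_image g) (sphere (0::complex) 1) f h"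
    using homeomorphic_simple_path_image_circle[OF assms, of 1 0] by (auto simp: homeomorphic_def)
  define c where "c t = cis (2 * pi * t)" for t
  have range_c: "range c = sphere 0 1"
  proof (intro equalityI subsetI)
    fix z :: complex assume "z \<in> sphere 0 1"
    moreover from this have "z \<noteq> 0" by auto
    ultimately have "c (Arg z / (2 * pi)) = z" using cis_Arg[of z] by (simp add: c_def sgn_div_norm)
    then show "z \<in> range c" by (metis rangeI)
  qed (auto simp: c_def)
  have c_inj: "s = t" if "\<bar>s - t\<bar> < 1" "c s = c t" for s t
  proof -
    have "cis (2 * pi * s - 2 * pi * t) = 1"
      using that(2) by (simp add: c_def flip: cis_divide)
    then have "Re (cis (2 * pi * s - 2 * pi * t)) = 1" by simp
    then have "cos (2 * pi * (s - t)) = 1" by (simp add: right_diff_distrib)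
    then obtain n :: int where "2 * pi * (s - t) = n * 2 * pi" by (auto simp: cos_one_2pi_int)
    then have "(s - t) * (2 * pi) = real_of_int n * (2 * pi)" by (simp add: algebra_simps)
    then have "s - t = n" by simp
    then have "\<bar>n\<bar> < 1" using that(1) by (metis of_int_abs of_int_less_1_iff)
    then show ?thesis using \<open>s - t = n\<close> by simp
  qed
  show ?thesis
  proof (rule that)
    show "continuous_on UNIV (h \<circ> c)"
      using hom range_c unfolding homeomorphism_def c_def
      by (intro continuous_on_compose continuous_intros) (auto simp: c_def)
    show "(h \<circ> c) (t + 1) = (h \<circ> c) t" for t
      by (simp add: c_def distrib_left cis_mult[symmetric])
    show "s = t" if "\<bar>s - t\<bar> < 1" "(h \<circ> c) s = (h \<circ> c) t" for s t
      using that hom range_c c_inj unfolding homeomorphism_def by (metis comp_apply rangeI)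
    show "range (h \<circ> c) = path_image g"
      using hom range_c unfolding homeomorphism_def by (metis image_comp)
  qed
qed

lemma connected_component_Union_disjoint:
  fixes F :: "'a::t2_space set set"
  assumes "finite F" "\<And>C. C \<in> F \<Longrightarrow> compact C \<and> connected C" "pairwise disjnt F" "C \<in> F" "x \<in> C"
  shows "connected_component_set (\<Union>F) x = C"
proof (rule antisym)
  show "C \<subseteq> connected_component_set (\<Union>F) x"
    using assms by (intro connected_component_maximal) auto
next
  define K where "K = connected_component_set (\<Union>F) x"
  define R where "R = \<Union>(F - {C})"
  have closed: "closed C" "closed R"
    using assms compact_imp_closed unfolding R_def by auto
  have "C \<inter> R = {}" using assms by (auto simp: R_def pairwise_def disjnt_def)
  have "x \<in> K" using assms(4,5) unfolding K_def by (auto intro: connected_component_refl)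
  then have K: "C \<inter> K \<noteq> {}" "K \<subseteq> C \<union> R" "connected K"
    using connected_component_subset[of "\<Union>F" x] assms(5) unfolding K_def R_def by blast+
  have "K \<inter> R = {}"
  proof (rule ccontr)
    assume "K \<inter> R \<noteq> {}"
    with closed K \<open>C \<inter> R = {}\<close> show False unfolding connected_closed by blast
  qed
  then show "K \<subseteq> C" using K(2) unfolding K_def by blast
qed

lemma C11_link_if_thick:
  assumes link: "is_link L" and thick: "ereal \<tau> \<le> thickness L" and "\<tau> > 0"
  shows "C11_link L"
  unfolding C11_link_def
proof
  fix x assume "x \<in> L"
  obtain F where F: "finite F" "\<forall>C\<in>F. simple_closed_curve C" "pairwise disjnt F" "L = \<Union>F"
    using link unfolding is_link_def by blast
  have curves: "compact C \<and> connected C" if "C \<in> F" for C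
  proof -
    have "simple_closed_curve C" using F(2) that by simp
    then obtain g where "simple_path g" "path_image g = C"
      unfolding simple_closed_curve_def by (elim exE conjE)
    then show ?thesis using compact_path_image[of g] connected_path_image[of g] simple_path_imp_path[of g] by simp
  qed
  obtain C where C: "C \<in> F" "x \<in> C" using F(4) \<open>x \<in> L\<close> by blast
  then have "simple_closed_curve C" using F(2) by simp
  then obtain g where g: "simple_path g" "pathfinish g = pathstart g" "path_image g = C"
    unfolding simple_closed_curve_def by (elim exE conjE)
  obtain G :: "real \<Rightarrow> real^3" where G: "continuous_on UNIV G" "\<And>t. G (t + 1) = G t"
    "\<And>s t. \<bar>s - t\<bar> < 1 \<Longrightarrow> G s = G t \<Longrightarrow> s = t" "range G = path_image g"
    by (rule simple_loop_periodic_param[OF g(1,2)]) (rule that)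
  have "range G \<subseteq> L" using G(4) g(3) C(1) F(4) by blast
  interpret thick_loop G \<tau>
  proof
    show "\<tau> > 0" "continuous_on UNIV G" "G (t + 1) = G t" for t by (fact \<open>\<tau> > 0\<close> G(1) G(2))+
    show "s = t" if "\<bar>s - t\<bar> < 1" "G s = G t" for s t using that by (rule G(3))
    fix p q p' q' assume "p \<in> range G" "q \<in> range G" "p' \<in> range G" "q' \<in> range G" "p \<noteq> q" "p' \<noteq> q'"
    with \<open>range G \<subseteq> L\<close> show "sin_angle (secant p q) (secant p' q') \<le> (dist p p' + dist q q') / (2 * \<tau>)"
      by (intro sin_angle_secants_le_dist[OF thick \<open>\<tau> > 0\<close>]) auto
  qed
  have "connected_component_set L x = range G"
    unfolding F(4) G(4) g(3) using F(1) curves F(3) C by (rule connected_component_Union_disjoint)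
  then show "\<exists>\<gamma> \<gamma>' lam K. (\<forall>t. \<gamma> (t + 1) = \<gamma> t) \<and> inj_on \<gamma> {0..<1} \<and>
       \<gamma> ` {0..1} = connected_component_set L x \<and> (\<forall>t. (\<gamma> has_vector_derivative \<gamma>' t) (at t)) \<and>
       lam > 0 \<and> (\<forall>t. norm (\<gamma>' t) = lam) \<and> (\<forall>s t. norm (\<gamma>' s - \<gamma>' t) \<le> K * \<bar>s - t\<bar>)"
    using C11_arc_param by simp
qed

theorem lemma4:
  fixes L :: "(real^3) set" and \<tau> :: real
  assumes "is_link L" and "thickness L = ereal \<tau>" and "\<tau> > 0"
  shows "(\<forall>x\<in>L. \<forall>y\<in>L. \<forall>x'\<in>L. \<forall>y'\<in>L. x \<noteq> y \<longrightarrow> x' \<noteq> y' \<longrightarrow>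
            ereal (rp2_dist (secant x y) (secant x' y'))
              \<le> ereal (1 / (2 * \<tau>)) * (arc_dist L x x' + arc_dist L y y'))
         \<and> C11_link L"
  using secant_lipschitz_arc_dist[of \<tau> L] C11_link_if_thick[of L \<tau>] assms by simp

end
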